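(* For every positive integer $n$, $$\operatorname{lcm}\left({n\brack 0}_q,{n\brack 1}_q,\ldots,{n\brack n}_q\right)=\frac{\operatorname{lcm}([1]_q,[2]_q,\ldots,[n+1]_q)}{[n+1]_q},$$ where both least common multiples are taken in $\mathbb{Z}[q]$. *)

theory Defs
  imports "HOL-Computational_Algebra.Computational_Algebra"
begin

definition qint :: "nat \<Rightarrow> int poly" where
  "qint k = (\<Sum>i<k. monom 1 i)"

definition qfact :: "nat \<Rightarrow> int poly" where
  "qfact n = (\<Prod>k\<in>{1..n}. qint k)"

text \<open>Gaussian binomial coefficient [n]_q! / ([k]_q! [n-k]_q!) (exact division in Z[q]).\<close>
definition qbinom :: "nat \<Rightarrow> nat \<Rightarrow> int poly" where
  "qbinom n k = (if k \<le> n then qfact n div (qfact k * qfact (n - k)) else 0)"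

end

theory Submission
  imports Defs
begin

(*
  Z[q] is a factorial ring, so it suffices to compare multiplicities at every prime p.
  The argument rests on one structural fact about q-integers (Section 1): for each prime p
  there are d >= 1 and e such that, for all m >= 1, p occurs in [m]_q with multiplicity e
  if d divides m and 0 otherwise (for p the d-th cyclotomic polynomial, e = 1).
  Section 2 studies the floor excess n div d - k div d - (n-k) div d: it is at most 1, and
  its maximum over 0 <= k <= n is 1 exactly when d <= n and d does not divide n+1.
  Section 3 derives the q-Legendre formula: p occurs in [n]_q! with multiplicity
  e * (n div d), hence in [n choose k]_q with multiplicity e times the floor excess.
  Since the multiplicity of p in an lcm is the maximum of the multiplicities (Section 4),
  both lcm_k [n choose k]_q * [n+1]_q and lcm([1]_q, ..., [n+1]_q) have multiplicity
  (if d <= n+1 then e else 0) at p; both are normalized, hence equal (Section 5).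
*)

section \<open>q-integers and their prime divisors\<close>

abbreviation X :: "int poly" where "X \<equiv> monom 1 1"

lemma monom_1_eq_X_power: "monom (1::int) i = X ^ i"
proof -
  have "X ^ i = monom (1::int) i" by (induction i) (auto simp: mult_monom)
  thus ?thesis by simp
qed

lemma qint_geometric: "qint m = (\<Sum>i<m. X ^ i)"
  unfolding qint_def by (intro sum.cong refl monom_1_eq_X_power)

lemma qint_add: "qint (a + b) = qint a + X ^ a * qint b"
  unfolding qint_geometric by (induction b) (auto simp: algebra_simps power_add)

lemma qint_0 [simp]: "qint 0 = 0"
  by (simp add: qint_def)

lemma qint_1 [simp]: "qint 1 = 1" "qint (Suc 0) = 1"
  by (simp_all add: qint_def)

lemma qint_mult: "qint (d * j) = qint d * (\<Sum>i<j. (X ^ d) ^ i)"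
proof (induction j)
  case (Suc j)
  have "qint (d * Suc j) = qint (d * j) + X ^ (d * j) * qint d"
    by (metis mult_Suc_right add.commute qint_add)
  also have "\<dots> = qint d * (\<Sum>i<Suc j. (X ^ d) ^ i)"
    using Suc by (simp add: algebra_simps power_mult)
  finally show ?case .
qed simp

lemma poly_qint_0: "m \<ge> 1 \<Longrightarrow> poly (qint m) 0 = 1"
  using qint_add[of 1 "m - 1"] by (simp add: poly_monom)

lemma qint_nonzero: "m \<ge> 1 \<Longrightarrow> qint m \<noteq> 0"
  using poly_qint_0 by force

lemma lead_coeff_qint: "m \<ge> 1 \<Longrightarrow> lead_coeff (qint m) = 1"
proof (induction m rule: dec_induct)
  case (step m)
  have "qint (Suc m) = pCons 1 (qint m)"
    using qint_add[of 1 m] by (simp add: monom_Suc monom_0 one_pCons)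
  then show ?case using step qint_nonzero[of m] by simp
qed simp

lemma normalize_qint: "m \<ge> 1 \<Longrightarrow> normalize (qint m) = qint m"
  using lead_coeff_qint[of m] by (simp add: normalize_poly_def pCons_one)

text \<open>A prime dividing some positive q-integer is coprime to q, since [b]_q = 1 + q [b-1]_q.\<close>
lemma prime_dvd_qint_not_dvd_X_power:
  assumes p: "prime p" and dvd: "p dvd qint b" and b: "b \<ge> 1"
  shows "\<not> p dvd X ^ a"
proof
  assume "p dvd X ^ a"
  hence "p dvd X" using p prime_dvd_power by blast
  hence "p dvd qint b - X * qint (b - 1)" using dvd by (simp add: dvd_diff)
  also have "qint b - X * qint (b - 1) = 1"
    using qint_add[of 1 "b - 1"] b by simp
  finally have "p dvd 1" .
  with p show False by simp
qed

text \<open>A prime dividing a positive q-integer is not a constant: its constant term must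
  divide the constant term 1 of the q-integer.  So it cannot divide a nonzero integer.\<close>
lemma prime_dvd_qint_not_dvd_const:
  assumes p: "prime p" and dvd: "p dvd qint d" and d: "d \<ge> 1" and j: "j \<ge> 1"
  shows "\<not> p dvd of_nat j"
proof
  assume "p dvd of_nat j"
  moreover have "(of_nat j :: int poly) \<noteq> 0" using j by simp
  ultimately have "degree p \<le> degree (of_nat j :: int poly)" by (rule dvd_imp_degree_le)
  hence "degree p = 0" by (simp add: of_nat_poly)
  then obtain c where pc: "p = [:c:]" by (meson degree_eq_zeroE)
  obtain r where "qint d = p * r" using dvd by blast
  hence "1 = c * poly r 0" using poly_qint_0[OF d] pc by simp
  hence "is_unit p" using pc by (metis dvd_triv_left is_unit_const_poly_iff)
  thus False using p by simp
qed

text \<open>Hence such a prime does not divide the cofactor [j]_{q^d} of [d]_q in [d*j]_q,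
  because [j]_{q^d} is congruent to j modulo [d]_q.\<close>
lemma prime_dvd_qint_not_dvd_cofactor:
  assumes p: "prime p" and dvd: "p dvd qint d" and d: "d \<ge> 1" and j: "j \<ge> 1"
  shows "\<not> p dvd (\<Sum>i<j. (X ^ d) ^ i)"
proof
  assume h: "p dvd (\<Sum>i<j. (X ^ d) ^ i)"
  have "qint d dvd (X ^ d) ^ i - 1" for i
  proof -
    have "(X ^ d) ^ i - 1 = (X ^ d - 1) * (\<Sum>k<i. (X ^ d) ^ k)" by (rule power_diff_1_eq)
    also have "X ^ d - 1 = (X - 1) * qint d"
      unfolding qint_geometric by (rule power_diff_1_eq)
    finally show ?thesis by simp
  qed
  hence "p dvd (\<Sum>i<j. (X ^ d) ^ i - 1)"
    using dvd by (meson dvd_sum dvd_trans)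
  hence "p dvd (\<Sum>i<j. (X ^ d) ^ i) - of_nat j"
    by (simp add: sum_subtractf)
  with h have "p dvd (\<Sum>i<j. (X ^ d) ^ i) - ((\<Sum>i<j. (X ^ d) ^ i) - of_nat j)"
    by (rule dvd_diff)
  hence "p dvd of_nat j" by simp
  thus False using prime_dvd_qint_not_dvd_const[OF p dvd d j] by contradiction
qed

text \<open>Prime divisors are stable under subtracting indices: [a]_q = [b]_q + q^b [a-b]_q.\<close>
lemma prime_dvd_qint_diff:
  assumes p: "prime p" and "p dvd qint a" "p dvd qint b" "b \<le> a"
  shows "p dvd qint (a - b)"
proof (cases "b = 0")
  case False
  have "qint a = qint b + X ^ b * qint (a - b)" using qint_add[of b "a - b"] assms by simp
  hence "p dvd X ^ b * qint (a - b)" using assms by (metis add_diff_cancel_left' dvd_diff)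
  thus ?thesis
    using prime_dvd_qint_not_dvd_X_power[OF p assms(3)] False p by (simp add: prime_dvd_mult_iff)
qed (use assms in simp)

text \<open>If d is the least positive index with p dividing [d]_q, then p divides [m]_q exactly
  when d divides m (Euclid's algorithm on indices).\<close>
lemma prime_dvd_qint_iff:
  assumes p: "prime p" and d: "d \<ge> 1" "p dvd qint d"
    and least: "\<And>m. m \<ge> 1 \<Longrightarrow> m < d \<Longrightarrow> \<not> p dvd qint m"
  shows "p dvd qint m \<longleftrightarrow> d dvd m"
proof
  have mult: "p dvd qint (d * k)" for k
    using d(2) qint_mult[of d k] by simp
  assume "p dvd qint m"
  hence "p dvd qint (m - d * (m div d))"
    by (rule prime_dvd_qint_diff[OF p _ mult]) simp
  hence "p dvd qint (m mod d)" by (simp add: minus_mult_div_eq_mod)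
  moreover have "m mod d < d" using d by simp
  ultimately have "m mod d = 0" using least by (metis less_one not_le)
  thus "d dvd m" by auto
next
  assume "d dvd m"
  thus "p dvd qint m" using d(2) qint_mult by (metis dvd_mult2 dvd_def)
qed

definition qint_profile :: "int poly \<Rightarrow> nat \<Rightarrow> nat \<Rightarrow> bool" where
  "qint_profile p d e \<longleftrightarrow>
     d \<ge> 1 \<and> (\<forall>m\<ge>1. multiplicity p (qint m) = (if d dvd m then e else 0))"

text \<open>Every prime has a profile, with d the least index such that p divides [d]_q and
  e the multiplicity of p in [d]_q: in [d*j]_q = [d]_q [j]_{q^d} the cofactor is prime to p.\<close>
lemma qint_profile_exists:
  assumes p: "prime p"
  shows "\<exists>d e. qint_profile p d e"
proof (cases "\<exists>m\<ge>1. p dvd qint m")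
  case False
  hence "qint_profile p 1 0"
    by (auto simp: qint_profile_def intro: not_dvd_imp_multiplicity_0)
  thus ?thesis by blast
next
  case True
  define d where "d = (LEAST m. m \<ge> 1 \<and> p dvd qint m)"
  have d: "d \<ge> 1" "p dvd qint d"
    unfolding d_def using LeastI_ex[of "\<lambda>m. m \<ge> 1 \<and> p dvd qint m"] True by auto
  have iff: "p dvd qint m \<longleftrightarrow> d dvd m" for m
    by (rule prime_dvd_qint_iff[OF p d]) (auto simp: d_def dest: not_less_Least)
  have "multiplicity p (qint m) = (if d dvd m then multiplicity p (qint d) else 0)"
    if m: "m \<ge> 1" for m
  proof (cases "d dvd m")
    case True
    then obtain j where j: "m = d * j" by blast
    with m have j1: "j \<ge> 1" by (cases j) auto
    have nz: "qint d \<noteq> 0" "(\<Sum>i<j. (X ^ d) ^ i) \<noteq> 0"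
      using qint_nonzero[OF m] unfolding j qint_mult by auto
    have "multiplicity p (qint m)
          = multiplicity p (qint d) + multiplicity p (\<Sum>i<j. (X ^ d) ^ i)"
      unfolding j qint_mult using p nz by (simp add: prime_elem_multiplicity_mult_distrib)
    also have "multiplicity p (\<Sum>i<j. (X ^ d) ^ i) = 0"
      using prime_dvd_qint_not_dvd_cofactor[OF p d(2) d(1) j1]
      by (rule not_dvd_imp_multiplicity_0)
    finally show ?thesis using True by simp
  qed (simp add: iff not_dvd_imp_multiplicity_0)
  thus ?thesis using d(1) unfolding qint_profile_def by blast
qed

section \<open>The floor excess\<close>

text \<open>The excess of n div d over k div d + (n - k) div d; it is the number of carries
  when adding k and n - k in "base d" at the lowest digit, and it governs the multiplicity
  of primes in Gaussian binomials.\<close>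
definition div_excess :: "nat \<Rightarrow> nat \<Rightarrow> nat \<Rightarrow> nat" where
  "div_excess d n k = n div d - k div d - (n - k) div d"

lemma div_excess_eq_carry:
  "k \<le> n \<Longrightarrow> div_excess d n k = (k mod d + (n - k) mod d) div d"
  using div_add1_eq[of k "n - k" d] by (simp add: div_excess_def)

text \<open>The excess is at most 1, and it vanishes when d > n or when d divides n + 1
  (then n mod d = d - 1 is the largest possible remainder, so no carry occurs).\<close>
lemma div_excess_le:
  assumes d: "d \<ge> 1" and k: "k \<le> n"
  shows "div_excess d n k \<le> (if d \<le> n \<and> \<not> d dvd Suc n then 1 else 0)"
proof -
  define s where "s = k mod d + (n - k) mod d"
  have "k mod d < d" "(n - k) mod d < d" using d by simp_all
  hence s_le: "s \<le> 2 * d - 2" unfolding s_def by linarith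
  hence "s < 2 * d" using d by linarith
  hence "s div d < 2" by (rule less_mult_imp_div_less)
  hence s_div_le: "s div d \<le> 1" by simp
  have no_carry: "s div d = 0" if "\<not> d \<le> n \<or> d dvd Suc n"
    using that
  proof
    assume "\<not> d \<le> n"
    thus ?thesis using k by (simp add: s_def)
  next
    assume "d dvd Suc n"
    hence "n mod d = d - 1" using d mod_Suc[of n d] by (auto split: if_splits)
    moreover have "s mod d = n mod d"
      unfolding s_def using k by (metis mod_add_eq le_add_diff_inverse)
    ultimately have "s = d * (s div d) + (d - 1)" by (metis div_mult_mod_eq mult.commute)
    hence "d * (s div d) < d * 1" using s_le d by linarith
    thus ?thesis by simp
  qed
  have excess: "div_excess d n k = s div d"
    unfolding s_def by (rule div_excess_eq_carry[OF k])
  show ?thesis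
    using s_div_le no_carry unfolding excess by (cases "d \<le> n \<and> \<not> d dvd Suc n") simp_all
qed

lemma div_excess_attained:
  assumes d: "d \<ge> 1" and "d \<le> n" "\<not> d dvd Suc n"
  shows "div_excess d n (d - 1) = 1"
proof -
  have "n - (d - 1) = Suc n - d" using assms by simp
  hence "(n - (d - 1)) mod d = Suc n mod d" using assms by (simp add: le_mod_geq)
  moreover have "0 < Suc n mod d" "Suc n mod d < d"
    using assms by (auto simp: dvd_eq_mod_eq_0)
  ultimately have "(d - 1) mod d + (n - (d - 1)) mod d = d + (Suc n mod d - 1)"
    using d by simp
  moreover have "Suc n mod d - 1 < d" using \<open>Suc n mod d < d\<close> by linarith
  hence "(d + (Suc n mod d - 1)) div d = 1" using d by simp
  ultimately show ?thesis using assms by (simp add: div_excess_eq_carry)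
qed

section \<open>Multiplicities in q-factorials and Gaussian binomials\<close>

lemma qfact_Suc: "qfact (Suc n) = qfact n * qint (Suc n)"
  unfolding qfact_def by (simp add: atLeastAtMostSuc_conv mult.commute)

lemma qfact_nonzero: "qfact n \<noteq> 0"
  unfolding qfact_def using qint_nonzero by auto

lemma multiplicity_qfact:
  assumes p: "prime p" and prof: "qint_profile p d e"
  shows "multiplicity p (qfact n) = e * (n div d)"
proof (induction n)
  case (Suc n)
  have "multiplicity p (qfact (Suc n)) = multiplicity p (qfact n) + multiplicity p (qint (Suc n))"
    unfolding qfact_Suc using p qfact_nonzero qint_nonzero[of "Suc n"]
    by (simp add: prime_elem_multiplicity_mult_distrib)
  also have "\<dots> = e * (Suc n div d)"
    using Suc prof by (auto simp: qint_profile_def div_Suc dvd_eq_mod_eq_0)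
  finally show ?case .
qed (simp add: qfact_def)

text \<open>[k]_q! [n-k]_q! divides [n]_q!, so the division defining qbinom is exact.\<close>
lemma qfact_dvd:
  assumes "k \<le> n" shows "qfact k * qfact (n - k) dvd qfact n"
proof (rule multiplicity_le_imp_dvd)
  show "qfact k * qfact (n - k) \<noteq> 0" using qfact_nonzero by simp
  fix p :: "int poly" assume p: "prime p"
  then obtain d e where prof: "qint_profile p d e" using qint_profile_exists by blast
  have "k div d + (n - k) div d \<le> n div d"
    using div_add1_eq[of k "n - k" d] assms by simp
  hence "e * (k div d) + e * ((n - k) div d) \<le> e * (n div d)"
    by (metis add_mult_distrib2 mult_le_mono2)
  thus "multiplicity p (qfact k * qfact (n - k)) \<le> multiplicity p (qfact n)"
    using p qfact_nonzero
    by (simp add: prime_elem_multiplicity_mult_distrib multiplicity_qfact[OF p prof])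
qed

lemma qbinom_times_qfacts: "k \<le> n \<Longrightarrow> qbinom n k * (qfact k * qfact (n - k)) = qfact n"
  unfolding qbinom_def using qfact_dvd by simp

lemma qbinom_nonzero: "k \<le> n \<Longrightarrow> qbinom n k \<noteq> 0"
  using qbinom_times_qfacts[of k n] qfact_nonzero by force

lemma multiplicity_qbinom:
  assumes p: "prime p" and prof: "qint_profile p d e" and k: "k \<le> n"
  shows "multiplicity p (qbinom n k) = e * div_excess d n k"
proof -
  have "multiplicity p (qfact n)
        = multiplicity p (qbinom n k) + (multiplicity p (qfact k) + multiplicity p (qfact (n - k)))"
    unfolding qbinom_times_qfacts[OF k, symmetric] using p qfact_nonzero qbinom_nonzero[OF k]
    by (simp add: prime_elem_multiplicity_mult_distrib)
  thus ?thesis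
    unfolding multiplicity_qfact[OF p prof] div_excess_def diff_mult_distrib2 by linarith
qed

section \<open>Multiplicities in least common multiples\<close>

lemma multiplicity_lcm:
  fixes a b :: "'a :: factorial_semiring_gcd"
  assumes p: "prime p" and "a \<noteq> 0" "b \<noteq> 0"
  shows "multiplicity p (lcm a b) = max (multiplicity p a) (multiplicity p b)"
proof -
  have "multiplicity p (lcm a b) = count (prime_factorization (lcm a b)) p"
    using p by (simp add: count_prime_factorization_prime)
  also have "\<dots> = max (count (prime_factorization a) p) (count (prime_factorization b) p)"
    using assms by (simp add: prime_factorization_lcm)
  also have "\<dots> = max (multiplicity p a) (multiplicity p b)"
    using p by (simp only: count_prime_factorization_prime)
  finally show ?thesis .
qed

lemma multiplicity_Lcm:
  fixes A :: "'a :: factorial_semiring_gcd set"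
  assumes p: "prime p" and "finite A" "A \<noteq> {}" "0 \<notin> A"
  shows "multiplicity p (Lcm A) = Max (multiplicity p ` A)"
  using assms(2-4)
proof (induction A rule: finite_ne_induct)
  case (insert x F)
  have "Lcm F \<noteq> 0" using insert by (simp add: Lcm_0_iff)
  then show ?case using insert p by (simp add: multiplicity_lcm)
qed simp

lemma multiplicity_Lcm_qbinom:
  assumes p: "prime p" and prof: "qint_profile p d e"
  shows "multiplicity p (Lcm ((\<lambda>k. qbinom n k) ` {0..n}))
         = (if d \<le> n \<and> \<not> d dvd Suc n then e else 0)"
proof -
  have d: "d \<ge> 1" using prof by (simp add: qint_profile_def)
  have "multiplicity p (Lcm ((\<lambda>k. qbinom n k) ` {0..n}))
        = Max ((\<lambda>k. multiplicity p (qbinom n k)) ` {0..n})"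
    using qbinom_nonzero by (subst multiplicity_Lcm[OF p]) (auto simp: image_image)
  also have "\<dots> = (if d \<le> n \<and> \<not> d dvd Suc n then e else 0)"
  proof (rule Max_eqI)
    fix y assume "y \<in> (\<lambda>k. multiplicity p (qbinom n k)) ` {0..n}"
    then obtain k where k: "k \<le> n" and y: "y = multiplicity p (qbinom n k)" by auto
    show "y \<le> (if d \<le> n \<and> \<not> d dvd Suc n then e else 0)"
      using div_excess_le[OF d k] unfolding y multiplicity_qbinom[OF p prof k]
      by (cases "d \<le> n \<and> \<not> d dvd Suc n") auto
  next
    show "(if d \<le> n \<and> \<not> d dvd Suc n then e else 0)
          \<in> (\<lambda>k. multiplicity p (qbinom n k)) ` {0..n}"
    proof (cases "d \<le> n \<and> \<not> d dvd Suc n")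
      case True
      have "d - 1 \<le> n" using True by linarith
      hence "multiplicity p (qbinom n (d - 1)) = e"
        using multiplicity_qbinom[OF p prof] div_excess_attained[OF d] True by simp
      thus ?thesis using True \<open>d - 1 \<le> n\<close> by (intro image_eqI[where x = "d - 1"]) auto
    next
      case False
      have "div_excess d n 0 = 0" by (simp add: div_excess_def)
      thus ?thesis using False multiplicity_qbinom[OF p prof, of 0 n]
        by (intro image_eqI[where x = 0]) auto
    qed
  qed simp
  finally show ?thesis .
qed

lemma multiplicity_Lcm_qint:
  assumes p: "prime p" and prof: "qint_profile p d e"
  shows "multiplicity p (Lcm (qint ` {1..N+1})) = (if d \<le> N + 1 then e else 0)"
proof -
  have d: "d \<ge> 1" and mult: "\<And>m. m \<ge> 1 \<Longrightarrow> multiplicity p (qint m) = (if d dvd m then e else 0)"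
    using prof by (auto simp: qint_profile_def)
  have "multiplicity p (Lcm (qint ` {1..N+1})) = Max ((\<lambda>m. multiplicity p (qint m)) ` {1..N+1})"
    using qint_nonzero by (subst multiplicity_Lcm[OF p]) (auto simp: image_image)
  also have "\<dots> = (if d \<le> N + 1 then e else 0)"
  proof (rule Max_eqI)
    fix y assume "y \<in> (\<lambda>m. multiplicity p (qint m)) ` {1..N+1}"
    then obtain m where m: "1 \<le> m" "m \<le> N + 1" and y: "y = multiplicity p (qint m)" by auto
    show "y \<le> (if d \<le> N + 1 then e else 0)"
      using dvd_imp_le[of d m] m by (auto simp: y mult)
  next
    show "(if d \<le> N + 1 then e else 0) \<in> (\<lambda>m. multiplicity p (qint m)) ` {1..N+1}"
    proof (cases "d \<le> N + 1")
      case True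
      thus ?thesis using d mult[of d] by (intro image_eqI[where x = d]) auto
    next
      case False
      thus ?thesis using mult[of 1] by (intro image_eqI[where x = 1]) auto
    qed
  qed simp
  finally show ?thesis .
qed

lemma Lcm_qbinom_times_qint:
  "Lcm ((\<lambda>k. qbinom n k) ` {0..n}) * qint (n + 1) = Lcm (qint ` {1..n+1})"
proof -
  let ?B = "Lcm ((\<lambda>k. qbinom n k) ` {0..n})"
  have B: "?B \<noteq> 0" using qbinom_nonzero by (auto simp: Lcm_0_iff)
  have Q: "qint (n + 1) \<noteq> 0" by (simp add: qint_nonzero)
  have "normalize (?B * qint (n + 1)) = normalize (Lcm (qint ` {1..n+1}))"
  proof (rule multiplicity_eq_imp_eq)
    fix p :: "int poly" assume p: "prime p"
    then obtain d e where prof: "qint_profile p d e" using qint_profile_exists by blast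
    have "multiplicity p (?B * qint (n + 1)) = multiplicity p ?B + multiplicity p (qint (n + 1))"
      using p B Q by (simp add: prime_elem_multiplicity_mult_distrib)
    also have "\<dots> = (if d \<le> n \<and> \<not> d dvd Suc n then e else 0) + (if d dvd n + 1 then e else 0)"
      using prof by (simp add: multiplicity_Lcm_qbinom[OF p prof] qint_profile_def)
    also have "\<dots> = (if d \<le> n + 1 then e else 0)"
    proof -
      consider "d \<le> n" | "d = n + 1" | "d > n + 1" by linarith
      thus ?thesis
      proof cases
        case 3
        hence "\<not> d dvd n + 1" by (auto dest: dvd_imp_le)
        thus ?thesis using 3 by simp
      qed auto
    qed
    also have "\<dots> = multiplicity p (Lcm (qint ` {1..n+1}))"
      by (rule multiplicity_Lcm_qint[OF p prof, symmetric])
    finally show "multiplicity p (?B * qint (n + 1)) = multiplicity p (Lcm (qint ` {1..n+1}))" .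
  qed (use B Q qint_nonzero in \<open>auto simp: Lcm_0_iff\<close>)
  thus ?thesis by (simp add: normalize_mult normalize_qint)
qed

text \<open>Dividing by the nonzero [n+1]_q gives the theorem (which also holds for n = 0).\<close>
theorem theorem2:
  fixes n :: nat
  assumes "n \<ge> 1"
  shows "Lcm ((\<lambda>k. qbinom n k) ` {0..n}) = Lcm (qint ` {1..n+1}) div qint (n + 1)"
  using Lcm_qbinom_times_qint[of n, symmetric] qint_nonzero[of "n + 1"] by simp

end
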